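(* Let $k$ be an algebraically closed field of characteristic $2$, $G=\mathrm{GL}(n,k)$ acting by conjugation on $\mathfrak g=\mathfrak{gl}(n,k)$, and $\mathcal N_1=\{x\in\mathfrak g:x^2=0\}$. Let $i$ be an integer with $n-2i\ge 2$, $i\ge 0$, and let $$e_i=\begin{pmatrix}0&0&I_i\\0&0&0\\0&0&0\end{pmatrix}$$ with diagonal blocks of sizes $i$, $n-2i$, $i$. Every element of the centralizer $\mathfrak z_{\mathfrak g}(e_i)$ has the block form $$x=\begin{pmatrix}A&B&C\\0&E&F\\0&0&A\end{pmatrix},\quad A,C\in\mathrm{Mat}_{i\times i},\ E\in\mathrm{Mat}_{(n-2i)\times(n-2i)},\ B\in\mathrm{Mat}_{i\times(n-2i)},\ F\in\mathrm{Mat}_{(n-2i)\times i}.$$ Let $V$ be an irreducible component of $\mathfrak z_{\mathfrak g}(e_i)\cap\mathcal N_1$, and suppose that some $x\in V$ has $E\neq 0$. Then $V$ is not contained in $\overline{G\cdot e_i}$.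
   Context: $\overline{G\cdot e_i}$ denotes the Zariski closure of the conjugacy class of $e_i$. *)

theory Defs
  imports "HOL-Computational_Algebra.Polynomial"
begin

text \<open>n x n matrices over 'k are represented as functions nat => nat => 'k
  that vanish outside the index range {0..<n} x {0..<n}.\<close>

definition mats :: "nat \<Rightarrow> (nat \<Rightarrow> nat \<Rightarrow> 'k::field) set" where
  "mats n = {X. \<forall>a b. (n \<le> a \<or> n \<le> b) \<longrightarrow> X a b = 0}"

definition mmul :: "nat \<Rightarrow> (nat \<Rightarrow> nat \<Rightarrow> 'k::field) \<Rightarrow> (nat \<Rightarrow> nat \<Rightarrow> 'k) \<Rightarrow> (nat \<Rightarrow> nat \<Rightarrow> 'k)" where
  "mmul n X Y = (\<lambda>a b. if a < n \<and> b < n then (\<Sum>c<n. X a c * Y c b) else 0)"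

definition midt :: "nat \<Rightarrow> (nat \<Rightarrow> nat \<Rightarrow> 'k::field)" where
  "midt n = (\<lambda>a b. if a < n \<and> b < n \<and> a = b then 1 else 0)"

inductive_set polyfuns :: "nat \<Rightarrow> ((nat \<Rightarrow> nat \<Rightarrow> 'k::field) \<Rightarrow> 'k) set" for n where
  const: "(\<lambda>X. c) \<in> polyfuns n"
| coord: "a < n \<Longrightarrow> b < n \<Longrightarrow> (\<lambda>X. X a b) \<in> polyfuns n"
| add: "f \<in> polyfuns n \<Longrightarrow> g \<in> polyfuns n \<Longrightarrow> (\<lambda>X. f X + g X) \<in> polyfuns n"
| mult: "f \<in> polyfuns n \<Longrightarrow> g \<in> polyfuns n \<Longrightarrow> (\<lambda>X. f X * g X) \<in> polyfuns n"

definition zclosed :: "nat \<Rightarrow> (nat \<Rightarrow> nat \<Rightarrow> 'k::field) set \<Rightarrow> bool" where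
  "zclosed n C \<longleftrightarrow> (\<exists>F \<subseteq> polyfuns n. C = {X \<in> mats n. \<forall>f\<in>F. f X = 0})"

definition zclosure :: "nat \<Rightarrow> (nat \<Rightarrow> nat \<Rightarrow> 'k::field) set \<Rightarrow> (nat \<Rightarrow> nat \<Rightarrow> 'k) set" where
  "zclosure n S = \<Inter>{C. zclosed n C \<and> S \<subseteq> C}"

definition zirreducible :: "nat \<Rightarrow> (nat \<Rightarrow> nat \<Rightarrow> 'k::field) set \<Rightarrow> bool" where
  "zirreducible n Z \<longleftrightarrow> Z \<noteq> {} \<and> Z \<subseteq> mats n \<and>
     (\<forall>C1 C2. zclosed n C1 \<and> zclosed n C2 \<and> Z \<subseteq> C1 \<union> C2 \<longrightarrow> Z \<subseteq> C1 \<or> Z \<subseteq> C2)"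

definition irr_component :: "nat \<Rightarrow> (nat \<Rightarrow> nat \<Rightarrow> 'k::field) set \<Rightarrow> (nat \<Rightarrow> nat \<Rightarrow> 'k) set \<Rightarrow> bool" where
  "irr_component n Y V \<longleftrightarrow> V \<subseteq> Y \<and> zirreducible n V \<and>
     (\<forall>W. V \<subseteq> W \<and> W \<subseteq> Y \<and> zirreducible n W \<longrightarrow> W = V)"

definition conj_orbit :: "nat \<Rightarrow> (nat \<Rightarrow> nat \<Rightarrow> 'k::field) \<Rightarrow> (nat \<Rightarrow> nat \<Rightarrow> 'k) set" where
  "conj_orbit n e = {mmul n (mmul n P e) Q | P Q.
      P \<in> mats n \<and> Q \<in> mats n \<and> mmul n P Q = midt n \<and> mmul n Q P = midt n}"

definition centralizer :: "nat \<Rightarrow> (nat \<Rightarrow> nat \<Rightarrow> 'k::field) \<Rightarrow> (nat \<Rightarrow> nat \<Rightarrow> 'k) set" where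
  "centralizer n e = {X \<in> mats n. mmul n X e = mmul n e X}"

definition sqzero :: "nat \<Rightarrow> (nat \<Rightarrow> nat \<Rightarrow> 'k::field) set" where
  "sqzero n = {X \<in> mats n. mmul n X X = (\<lambda>a b. 0)}"

text \<open>e_i: identity block I_i in rows 0..i-1, columns n-i..n-1 (0-based).\<close>
definition e_mat :: "nat \<Rightarrow> nat \<Rightarrow> (nat \<Rightarrow> nat \<Rightarrow> 'k::field)" where
  "e_mat n i = (\<lambda>a b. if a < i \<and> b = a + (n - i) then 1 else 0)"

definition E_block_nonzero :: "nat \<Rightarrow> nat \<Rightarrow> (nat \<Rightarrow> nat \<Rightarrow> 'k::field) \<Rightarrow> bool" where
  "E_block_nonzero n i X \<longleftrightarrow> (\<exists>a b. i \<le> a \<and> a < n - i \<and> i \<le> b \<and> b < n - i \<and> X a b \<noteq> 0)"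

end

theory Submission
  imports Defs "Jordan_Normal_Form.Char_Poly"
begin

text \<open>
  In characteristic 2, \<open>(v + t e)\<^sup>2 = v\<^sup>2 + 2 t v e + t\<^sup>2 e\<^sup>2 = 0\<close> for every \<open>v\<close> in
  \<open>z(e) \<inter> N\<^sub>1\<close>, so sweeping \<open>V\<close> along the line \<open>k e\<close> gives an irreducible subset of
  \<open>z(e) \<inter> N\<^sub>1\<close> containing \<open>V\<close>; by maximality \<open>V + k e = V\<close>.
  Every matrix in the closure of the orbit of \<open>e = e\<^sub>i\<close> has rank at most \<open>i\<close>, i.e. all its
  \<open>(i+1)\<close>-minors vanish. But if \<open>x \<in> V\<close> has \<open>x(a,b) \<noteq> 0\<close> inside the block \<open>E\<close>, then the
  minor of \<open>x + t e\<close> on the rows \<open>0,\<dots>,i-1,a\<close> and the columns \<open>n-i,\<dots>,n-1,b\<close> is, by a Schur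
  complement, \<open>x(a,b) \<cdot> det (S + t I)\<close> for a fixed \<open>i \<times> i\<close> matrix \<open>S\<close>. As \<open>k\<close> is
  infinite, it is nonzero for some \<open>t\<close>.
\<close>

lemma infinite_UNIV_alg_closed_field: "infinite (UNIV :: 'k::alg_closed_field set)"
proof
  assume fin: "finite (UNIV :: 'k set)"
  define q :: "'k poly" where "q = (\<Prod>a\<in>UNIV. [:-a, 1:])"
  have "degree q = card (UNIV :: 'k set)" unfolding q_def
    by (subst degree_prod_eq_sum_degree) auto
  moreover have "card (UNIV :: 'k set) > 0" using fin by (simp add: finite_UNIV_card_ge_0)
  ultimately have "degree (q + 1) > 0" by (simp add: degree_add_eq_left)
  then obtain x where "poly (q + 1) x = 0" using alg_closed_imp_poly_has_root by blast
  moreover have "poly q x = 0" unfolding q_def poly_prod using fin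
    by (rule prod_zero) (auto intro!: bexI[of _ x])
  ultimately show False by simp
qed

subsection \<open>Polynomial functions and the Zariski topology\<close>

lemma polyfuns_sum:
  assumes "finite A" "\<And>j. j \<in> A \<Longrightarrow> g j \<in> polyfuns n"
  shows "(\<lambda>X. \<Sum>j\<in>A. g j X) \<in> polyfuns n"
  using assms
proof (induction A rule: finite_induct)
  case empty
  then show ?case using polyfuns.const[of 0] by simp
next
  case (insert x F)
  then show ?case using polyfuns.add[of "g x" n "\<lambda>X. \<Sum>j\<in>F. g j X"] by simp
qed

lemma polyfuns_prod:
  assumes "finite A" "\<And>j. j \<in> A \<Longrightarrow> g j \<in> polyfuns n"
  shows "(\<lambda>X. \<Prod>j\<in>A. g j X) \<in> polyfuns n"
  using assms
proof (induction A rule: finite_induct)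
  case empty
  then show ?case using polyfuns.const[of 1] by simp
next
  case (insert x F)
  then show ?case using polyfuns.mult[of "g x" n "\<lambda>X. \<Prod>j\<in>F. g j X"] by simp
qed

definition minor :: "nat \<Rightarrow> (nat \<Rightarrow> nat) \<Rightarrow> (nat \<Rightarrow> nat) \<Rightarrow> (nat \<Rightarrow> nat \<Rightarrow> 'k::field) \<Rightarrow> 'k" where
  "minor m rs cs X = det (mat m m (\<lambda>(r,c). X (rs r) (cs c)))"

lemma polyfuns_minor:
  assumes "\<And>r. r < m \<Longrightarrow> rs r < n" "\<And>c. c < m \<Longrightarrow> cs c < n"
  shows "minor m rs cs \<in> polyfuns n"
proof -
  have "minor m rs cs =
      (\<lambda>X. \<Sum>p\<in>{p. p permutes {0..<m}}. signof p * (\<Prod>r\<in>{0..<m}. X (rs r) (cs (p r))))"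
    unfolding minor_def det_def'[OF mat_carrier]
    by (auto simp: permutes_in_image intro!: ext sum.cong prod.cong)
  also have "\<dots> \<in> polyfuns n"
  proof (intro polyfuns_sum)
    fix p assume p: "p \<in> {p. p permutes {0..<m}}"
    have "(\<lambda>X. \<Prod>r\<in>{0..<m}. X (rs r) (cs (p r))) \<in> polyfuns n"
      using assms p by (intro polyfuns_prod polyfuns.coord) (auto simp: permutes_in_image)
    then show "(\<lambda>X. signof p * (\<Prod>r\<in>{0..<m}. X (rs r) (cs (p r)))) \<in> polyfuns n"
      using polyfuns.mult[OF polyfuns.const] by blast
  qed (simp add: finite_permutations)
  finally show ?thesis .
qed

lemma polyfuns_translate:
  assumes "f \<in> polyfuns n"
  shows "(\<lambda>X. f (\<lambda>a b. X a b + t * w a b)) \<in> polyfuns n"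
  using assms
proof (induction rule: polyfuns.induct)
  case (const c)
  then show ?case by (rule polyfuns.const)
next
  case (coord a b)
  then show ?case
    using polyfuns.add[OF polyfuns.coord[of a n b] polyfuns.const[of "t * w a b"]] by simp
next
  case (add f g)
  then show ?case using polyfuns.add by fastforce
next
  case (mult f g)
  then show ?case using polyfuns.mult by fastforce
qed

lemma polyfuns_along_line:
  assumes "f \<in> polyfuns n"
  shows "\<exists>p. \<forall>t. f (\<lambda>a b. v a b + t * w a b) = poly p t"
  using assms
proof (induction rule: polyfuns.induct)
  case (const c)
  then show ?case by (intro exI[of _ "[:c:]"]) simp
next
  case (coord a b)
  then show ?case by (intro exI[of _ "[:v a b, w a b:]"]) (simp add: algebra_simps)
next
  case (add f g)
  then obtain p q where "\<forall>t. f (\<lambda>a b. v a b + t * w a b) = poly p t"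
    "\<forall>t. g (\<lambda>a b. v a b + t * w a b) = poly q t" by blast
  then show ?case by (intro exI[of _ "p + q"]) simp
next
  case (mult f g)
  then obtain p q where "\<forall>t. f (\<lambda>a b. v a b + t * w a b) = poly p t"
    "\<forall>t. g (\<lambda>a b. v a b + t * w a b) = poly q t" by blast
  then show ?case by (intro exI[of _ "p * q"]) simp
qed

lemma zclosed_translate:
  assumes "zclosed n C" "w \<in> mats n"
  shows "zclosed n {X \<in> mats n. (\<lambda>a b. X a b + t * w a b) \<in> C}"
proof -
  obtain F where F: "F \<subseteq> polyfuns n" "C = {X \<in> mats n. \<forall>f\<in>F. f X = 0}"
    using assms(1) unfolding zclosed_def by blast
  let ?G = "(\<lambda>f X. f (\<lambda>a b. X a b + t * w a b)) ` F"
  have "?G \<subseteq> polyfuns n" using F(1) polyfuns_translate by blast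
  moreover have "{X \<in> mats n. (\<lambda>a b. X a b + t * w a b) \<in> C} = {X \<in> mats n. \<forall>g\<in>?G. g X = 0}"
    using assms(2) unfolding F(2) by (auto simp: mats_def)
  ultimately show ?thesis unfolding zclosed_def by blast
qed

lemma zclosed_line_finite_or_all:
  assumes C: "zclosed n C" and "v \<in> mats n" "w \<in> mats n"
  shows "finite {t. (\<lambda>a b. v a b + t * w a b) \<in> C} \<or> (\<forall>t. (\<lambda>a b. v a b + t * w a b) \<in> C)"
proof (rule disjCI)
  assume "\<not> (\<forall>t. (\<lambda>a b. v a b + t * w a b) \<in> C)"
  then obtain t0 where t0: "(\<lambda>a b. v a b + t0 * w a b) \<notin> C" by blast
  obtain F where F: "F \<subseteq> polyfuns n" "C = {X \<in> mats n. \<forall>f\<in>F. f X = 0}"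
    using C unfolding zclosed_def by blast
  have "(\<lambda>a b. v a b + t0 * w a b) \<in> mats n" using assms(2,3) by (auto simp: mats_def)
  then obtain f where f: "f \<in> F" "f (\<lambda>a b. v a b + t0 * w a b) \<noteq> 0" using t0 F(2) by auto
  obtain p where p: "\<forall>t. f (\<lambda>a b. v a b + t * w a b) = poly p t"
    using polyfuns_along_line F(1) f(1) by blast
  have "p \<noteq> 0" using f(2) p by auto
  moreover have "{t. (\<lambda>a b. v a b + t * w a b) \<in> C} \<subseteq> {t. poly p t = 0}"
    using f(1) p F(2) by auto
  ultimately show "finite {t. (\<lambda>a b. v a b + t * w a b) \<in> C}"
    using poly_roots_finite finite_subset by blast
qed

lemma zirreducible_sweep:
  fixes V :: "(nat \<Rightarrow> nat \<Rightarrow> 'k::field) set"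
  assumes inf: "infinite (UNIV :: 'k set)" and V: "zirreducible n V" and w: "w \<in> mats n"
  shows "zirreducible n {(\<lambda>a b. v a b + t * w a b) | v t. v \<in> V}" (is "zirreducible n ?W")
proof -
  have Vm: "V \<subseteq> mats n" and "V \<noteq> {}" using V by (auto simp: zirreducible_def)
  let ?preim = "\<lambda>C t. {X \<in> mats n. (\<lambda>a b. X a b + t * w a b) \<in> C}"
  define T where "T C = {t. V \<subseteq> ?preim C t}" for C
  have sweep_in: "?W \<subseteq> C" if C: "zclosed n C" and T: "infinite (T C)" for C
  proof
    fix x assume "x \<in> ?W"
    then obtain v t where x: "x = (\<lambda>a b. v a b + t * w a b)" and v: "v \<in> V" by blast
    have "T C \<subseteq> {s. (\<lambda>a b. v a b + s * w a b) \<in> C}" using v unfolding T_def by blast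
    hence "infinite {s. (\<lambda>a b. v a b + s * w a b) \<in> C}" using T finite_subset by blast
    thus "x \<in> C" using zclosed_line_finite_or_all[OF C, of v w] v Vm w x by blast
  qed
  have "?W \<subseteq> C1 \<or> ?W \<subseteq> C2"
    if C1: "zclosed n C1" and C2: "zclosed n C2" and cover: "?W \<subseteq> C1 \<union> C2" for C1 C2
  proof -
    have "V \<subseteq> ?preim C1 t \<or> V \<subseteq> ?preim C2 t" for t
    proof -
      have "V \<subseteq> ?preim C1 t \<union> ?preim C2 t" using cover Vm by blast
      thus ?thesis
        using V zclosed_translate[OF C1 w] zclosed_translate[OF C2 w] unfolding zirreducible_def by blast
    qed
    hence "T C1 \<union> T C2 = UNIV" unfolding T_def by blast
    hence "infinite (T C1) \<or> infinite (T C2)" using inf by (metis finite_UnI)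
    thus ?thesis using sweep_in C1 C2 by blast
  qed
  moreover have "?W \<subseteq> mats n" using Vm w by (auto simp: mats_def)
  moreover have "?W \<noteq> {}" using \<open>V \<noteq> {}\<close> by blast
  ultimately show ?thesis unfolding zirreducible_def by blast
qed

subsection \<open>The orbit closure of \<open>e\<^sub>i\<close> has rank at most \<open>i\<close>\<close>

lemma mmul_e_mat_entry:
  fixes P Q :: "nat \<Rightarrow> nat \<Rightarrow> 'k::field"
  assumes "i \<le> n" "a < n" "b < n"
  shows "mmul n (mmul n P (e_mat n i)) Q a b = (\<Sum>j<i. P a j * Q (j + (n-i)) b)"
proof -
  have Pe: "mmul n P (e_mat n i) a c = (if n - i \<le> c then P a (c - (n-i)) else 0)" if c: "c < n" for c
  proof -
    have "mmul n P (e_mat n i) a c = (\<Sum>d<n. P a d * e_mat n i d c)"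
      using c assms by (simp add: mmul_def)
    also have "\<dots> = (\<Sum>d<n. if d = c - (n-i) then (if n - i \<le> c then P a d else 0) else 0)"
      by (rule sum.cong[OF refl]) (use c assms in \<open>auto simp: e_mat_def\<close>)
    also have "\<dots> = (if n - i \<le> c then P a (c - (n-i)) else 0)"
      using c by (subst sum.delta) auto
    finally show ?thesis .
  qed
  have "mmul n (mmul n P (e_mat n i)) Q a b = (\<Sum>c<n. (if n - i \<le> c then P a (c - (n-i)) else 0) * Q c b)"
    unfolding mmul_def[of n "mmul n P (e_mat n i)" Q] using assms Pe by (auto intro!: sum.cong)
  also have "\<dots> = (\<Sum>c\<in>{n-i..<n}. P a (c - (n-i)) * Q c b)"
    by (rule sum.mono_neutral_cong_right) auto
  also have "\<dots> = (\<Sum>c\<in>{0+(n-i)..<i+(n-i)}. P a (c - (n-i)) * Q c b)"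
    using assms by simp
  also have "\<dots> = (\<Sum>j<i. P a j * Q (j + (n-i)) b)"
    by (subst sum.shift_bounds_nat_ivl) (simp add: lessThan_atLeast0)
  finally show ?thesis .
qed

text \<open>The submatrix is \<open>P' Q'\<close>, where the square matrix \<open>P'\<close> has a zero last column.\<close>

lemma minor_mmul_e_mat_eq_0:
  fixes P Q :: "nat \<Rightarrow> nat \<Rightarrow> 'k::field"
  assumes i: "i \<le> n" and rs: "\<And>r. r < i+1 \<Longrightarrow> rs r < n" and cs: "\<And>c. c < i+1 \<Longrightarrow> cs c < n"
  shows "minor (i+1) rs cs (mmul n (mmul n P (e_mat n i)) Q) = 0"
proof -
  define P' where "P' = mat (i+1) (i+1) (\<lambda>(r,j). if j < i then P (rs r) j else (0::'k))"
  define Q' where "Q' = mat (i+1) (i+1) (\<lambda>(j,c). Q (j + (n-i)) (cs c))"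
  have "mat (i+1) (i+1) (\<lambda>(r,c). mmul n (mmul n P (e_mat n i)) Q (rs r) (cs c)) = P' * Q'"
  proof (rule eq_matI)
    fix r c assume "r < dim_row (P' * Q')" and "c < dim_col (P' * Q')"
    hence r: "r < i+1" and c: "c < i+1" by (auto simp: P'_def Q'_def)
    have "(P' * Q') $$ (r,c) = (\<Sum>j<i+1. P' $$ (r,j) * Q' $$ (j,c))"
      using r c by (simp add: P'_def Q'_def scalar_prod_def lessThan_atLeast0)
    also have "\<dots> = (\<Sum>j<i. P (rs r) j * Q (j + (n-i)) (cs c))"
      using r c by (simp add: P'_def Q'_def)
    finally show "mat (i+1) (i+1) (\<lambda>(r,c). mmul n (mmul n P (e_mat n i)) Q (rs r) (cs c)) $$ (r,c)
        = (P' * Q') $$ (r,c)"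
      using r c mmul_e_mat_entry[OF i rs[OF r] cs[OF c]] by simp
  qed (auto simp: P'_def Q'_def)
  moreover have "det P' = 0"
  proof -
    have "(\<Prod>r = 0..<i+1. P' $$ (r, p r)) = 0" if p: "p permutes {0..<i+1}" for p
    proof -
      have "i \<in> p ` {0..<i+1}" using permutes_image[OF p] by simp
      then obtain r where "r \<in> {0..<i+1}" "p r = i" by auto
      then show ?thesis by (intro prod_zero) (auto simp: P'_def intro!: bexI[of _ r])
    qed
    then show ?thesis unfolding P'_def det_def'[OF mat_carrier]
      by (intro sum.neutral) (simp del: prod.op_ivl_Suc)
  qed
  ultimately show ?thesis
    unfolding minor_def using det_mult[of P' "i+1" Q'] by (simp add: P'_def Q'_def)
qed

lemma minor_zclosure_conj_orbit_eq_0: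
  fixes X :: "nat \<Rightarrow> nat \<Rightarrow> 'k::field"
  assumes i: "i \<le> n" and rs: "\<And>r. r < i+1 \<Longrightarrow> rs r < n" and cs: "\<And>c. c < i+1 \<Longrightarrow> cs c < n"
    and X: "X \<in> zclosure n (conj_orbit n (e_mat n i))"
  shows "minor (i+1) rs cs X = 0"
proof -
  let ?Z = "{Y \<in> mats n. \<forall>f\<in>{minor (i+1) rs cs}. f Y = 0}"
  have "zclosed n ?Z"
    unfolding zclosed_def using polyfuns_minor[of "i+1" rs n cs] rs cs by blast
  moreover have "conj_orbit n (e_mat n i) \<subseteq> ?Z"
    using minor_mmul_e_mat_eq_0[OF i rs cs] by (auto simp: conj_orbit_def mats_def mmul_def)
  ultimately have "X \<in> ?Z" using X unfolding zclosure_def by blast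
  then show ?thesis by simp
qed

subsection \<open>A Schur complement computation\<close>

lemma det_Schur_complement_last:
  fixes M :: "'a::field mat"
  assumes M: "M \<in> carrier_mat (m+1) (m+1)" and e: "M $$ (m,m) \<noteq> 0"
  shows "det M = M $$ (m,m) * det (mat m m (\<lambda>(r,c). M $$ (r,c) - M $$ (r,m) * M $$ (m,c) / M $$ (m,m)))"
    (is "_ = ?e * det ?S")
proof -
  define L where "L = mat (m+1) (m+1) (\<lambda>(r,c). if r = c then 1 else if c = m then M $$ (r,m) / ?e else 0)"
  define U where "U = mat (m+1) (m+1) (\<lambda>(r,c). if r < m then (if c < m then ?S $$ (r,c) else 0) else M $$ (m,c))"
  have "U = four_block_mat ?S (0\<^sub>m m 1) (mat 1 m (\<lambda>(_,c). M $$ (m,c))) (mat 1 1 (\<lambda>_. ?e))"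
    unfolding U_def by (rule eq_matI) (auto simp: less_Suc_eq)
  hence detU: "det U = det ?S * ?e"
    using det_four_block_mat_upper_right_zero_col[of ?S m "0\<^sub>m m 1" "mat 1 m (\<lambda>(_,c). M $$ (m,c))"
        "mat 1 1 (\<lambda>_. ?e)"]
    by (simp add: det_single)
  have "upper_triangular L" unfolding L_def upper_triangular_def by auto
  moreover have "diag_mat L = replicate (m+1) 1"
    by (rule nth_equalityI) (simp_all add: diag_mat_def L_def del: upt_Suc replicate_Suc)
  ultimately have detL: "det L = 1" using det_upper_triangular[of L "m+1"] by (simp add: L_def)
  have "M = L * U"
  proof (rule eq_matI)
    fix r c assume "r < dim_row (L * U)" "c < dim_col (L * U)"
    hence r: "r < m+1" and c: "c < m+1" by (auto simp: L_def U_def)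
    have "(L * U) $$ (r,c) = (\<Sum>k<m+1. L $$ (r,k) * U $$ (k,c))"
      using r c by (simp add: L_def U_def scalar_prod_def lessThan_atLeast0)
    also have "\<dots> = (\<Sum>k<m. L $$ (r,k) * U $$ (k,c)) + L $$ (r,m) * U $$ (m,c)"
      by simp
    also have "(\<Sum>k<m. L $$ (r,k) * U $$ (k,c)) = (\<Sum>k<m. if k = r then U $$ (r,c) else 0)"
      by (rule sum.cong) (use r in \<open>auto simp: L_def\<close>)
    finally have "(L * U) $$ (r,c) = (if r < m then U $$ (r,c) else 0) + L $$ (r,m) * U $$ (m,c)"
      by simp
    then show "M $$ (r,c) = (L * U) $$ (r,c)"
      using r c e M by (auto simp: L_def U_def less_Suc_eq field_simps)
  qed (use M in \<open>auto simp: L_def U_def\<close>)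
  then show ?thesis using det_mult[of L "m+1" U] detL detU by (simp add: L_def U_def)
qed

lemma ex_det_add_scalar_nonzero:
  fixes C :: "'a::field mat"
  assumes inf: "infinite (UNIV :: 'a set)" and C: "C \<in> carrier_mat m m"
  shows "\<exists>t. det (C + t \<cdot>\<^sub>m 1\<^sub>m m) \<noteq> 0"
proof -
  have "char_poly C \<noteq> 0" using degree_monic_char_poly[OF C] by auto
  hence "finite {s. poly (char_poly C) s = 0}" by (rule poly_roots_finite)
  then obtain s where "poly (char_poly C) s \<noteq> 0" using ex_new_if_finite[OF inf] by blast
  hence "det (char_matrix C s) \<noteq> 0"
    using eigenvalue_root_char_poly[OF C] eigenvalue_det[OF C] by simp
  moreover have "char_matrix C s = C + (- s) \<cdot>\<^sub>m 1\<^sub>m m" using C by (simp add: char_matrix_def)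
  ultimately show ?thesis by metis
qed

text \<open>The perturbation vanishes in the last row and column, so it just adds \<open>t I\<close> to the Schur complement.\<close>

lemma ex_det_add_partial_identity_nonzero:
  fixes M :: "'a::field mat"
  assumes inf: "infinite (UNIV :: 'a set)" and M: "M \<in> carrier_mat (m+1) (m+1)" and e: "M $$ (m,m) \<noteq> 0"
  shows "\<exists>t. det (mat (m+1) (m+1) (\<lambda>(r,c). M $$ (r,c) + (if r < m \<and> c = r then t else 0))) \<noteq> 0"
proof -
  define S where "S = mat m m (\<lambda>(r,c). M $$ (r,c) - M $$ (r,m) * M $$ (m,c) / M $$ (m,m))"
  obtain t where t: "det (S + t \<cdot>\<^sub>m 1\<^sub>m m) \<noteq> 0"
    using ex_det_add_scalar_nonzero[OF inf, of S m] by (auto simp: S_def)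
  define Mt where "Mt = mat (m+1) (m+1) (\<lambda>(r,c). M $$ (r,c) + (if r < m \<and> c = r then t else 0))"
  have "mat m m (\<lambda>(r,c). Mt $$ (r,c) - Mt $$ (r,m) * Mt $$ (m,c) / Mt $$ (m,m)) = S + t \<cdot>\<^sub>m 1\<^sub>m m"
    by (rule eq_matI) (auto simp: Mt_def S_def)
  moreover have "Mt $$ (m,m) = M $$ (m,m)" by (simp add: Mt_def)
  ultimately have "det Mt = M $$ (m,m) * det (S + t \<cdot>\<^sub>m 1\<^sub>m m)"
    using det_Schur_complement_last[of Mt m] e by (simp add: Mt_def)
  then have "det Mt \<noteq> 0" using e t by simp
  then show ?thesis unfolding Mt_def by blast
qed

lemma ex_minor_add_smult_e_mat_nonzero:
  fixes x :: "nat \<Rightarrow> nat \<Rightarrow> 'k::field"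
  assumes inf: "infinite (UNIV :: 'k set)"
    and a0: "i \<le> a0" and b0: "b0 < n - i" and x: "x a0 b0 \<noteq> 0"
  shows "\<exists>t. minor (i+1) (\<lambda>r. if r < i then r else a0) (\<lambda>c. if c < i then c + (n - i) else b0)
               (\<lambda>a b. x a b + t * e_mat n i a b) \<noteq> 0"
proof -
  let ?rs = "\<lambda>r. if r < i then r else a0" and ?cs = "\<lambda>c. if c < i then c + (n - i) else b0"
  define M where "M = mat (i+1) (i+1) (\<lambda>(r,c). x (?rs r) (?cs c))"
  obtain t where t: "det (mat (i+1) (i+1) (\<lambda>(r,c). M $$ (r,c) + (if r < i \<and> c = r then t else 0))) \<noteq> 0"
    using ex_det_add_partial_identity_nonzero[OF inf, of M i] x by (auto simp: M_def)
  have "mat (i+1) (i+1) (\<lambda>(r,c). M $$ (r,c) + (if r < i \<and> c = r then t else 0))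
      = mat (i+1) (i+1) (\<lambda>(r,c). x (?rs r) (?cs c) + t * e_mat n i (?rs r) (?cs c))"
    by (rule eq_matI) (use a0 b0 in \<open>auto simp: M_def e_mat_def\<close>)
  then show ?thesis using t unfolding minor_def by auto
qed

subsection \<open>Irreducible components of \<open>z(e\<^sub>i) \<inter> N\<^sub>1\<close> are stable under adding \<open>k e\<^sub>i\<close>\<close>

lemma mmul_add_smult_left:
  "mmul n (\<lambda>a b. X a b + t * Z a b) Y = (\<lambda>a b. mmul n X Y a b + t * mmul n Z Y a b)"
  by (auto simp: mmul_def distrib_right sum.distrib sum_distrib_left mult.assoc intro!: ext)

lemma mmul_add_smult_right:
  "mmul n Y (\<lambda>a b. X a b + t * Z a b) = (\<lambda>a b. mmul n Y X a b + t * mmul n Y Z a b)"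
  by (auto simp: mmul_def distrib_left sum.distrib sum_distrib_left mult.assoc mult.left_commute intro!: ext)

lemma e_mat_mats: "i \<le> n \<Longrightarrow> e_mat n i \<in> mats n"
  by (auto simp: mats_def e_mat_def)

lemma mmul_e_mat_e_mat: "2 * i \<le> n \<Longrightarrow> mmul n (e_mat n i) (e_mat n i) = (\<lambda>a b. 0)"
  by (auto simp: mmul_def e_mat_def intro!: ext sum.neutral)

lemma add_smult_e_mat_centralizer_sqzero:
  fixes v :: "nat \<Rightarrow> nat \<Rightarrow> 'k::field"
  assumes char: "CHAR('k) = 2" and i: "2 * i \<le> n"
    and v: "v \<in> centralizer n (e_mat n i) \<inter> sqzero n"
  shows "(\<lambda>a b. v a b + t * e_mat n i a b) \<in> centralizer n (e_mat n i) \<inter> sqzero n"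
proof -
  let ?e = "e_mat n i" and ?w = "\<lambda>a b. v a b + t * e_mat n i a b"
  have vm: "v \<in> mats n" and ve: "mmul n v ?e = mmul n ?e v" and vv: "mmul n v v = (\<lambda>a b. 0)"
    using v by (auto simp: centralizer_def sqzero_def)
  have ee: "mmul n ?e ?e = (\<lambda>a b. 0)" using mmul_e_mat_e_mat[OF i] .
  have two: "(2::'k) = 0" using of_nat_CHAR[where 'a='k] char by simp
  have "?w \<in> mats n" using vm e_mat_mats[of i n] i by (auto simp: mats_def)
  moreover have "mmul n ?w ?e = mmul n ?e ?w"
    unfolding mmul_add_smult_left mmul_add_smult_right ee ve by simp
  moreover have "mmul n ?w ?w = (\<lambda>a b. t * (2 * mmul n v ?e a b))"
    unfolding mmul_add_smult_left mmul_add_smult_right ee ve vv by (auto intro!: ext simp: algebra_simps)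
  ultimately show ?thesis using two by (auto simp: centralizer_def sqzero_def)
qed

lemma irr_component_add_smult_e_mat:
  fixes V :: "(nat \<Rightarrow> nat \<Rightarrow> 'k::field) set"
  assumes inf: "infinite (UNIV :: 'k set)" and char: "CHAR('k) = 2" and i: "2 * i \<le> n"
    and V: "irr_component n (centralizer n (e_mat n i) \<inter> sqzero n) V" and v: "v \<in> V"
  shows "(\<lambda>a b. v a b + t * e_mat n i a b) \<in> V"
proof -
  let ?Y = "centralizer n (e_mat n i) \<inter> sqzero n"
  let ?W = "{(\<lambda>a b. v a b + t * e_mat n i a b) | v t. v \<in> V}"
  have VY: "V \<subseteq> ?Y" and Virr: "zirreducible n V"
    and Vmax: "\<And>W. V \<subseteq> W \<Longrightarrow> W \<subseteq> ?Y \<Longrightarrow> zirreducible n W \<Longrightarrow> W = V"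
    using V unfolding irr_component_def by blast+
  have "V \<subseteq> ?W"
  proof
    fix u assume "u \<in> V"
    moreover have "u = (\<lambda>a b. u a b + 0 * e_mat n i a b)" by simp
    ultimately show "u \<in> ?W" by blast
  qed
  moreover have "?W \<subseteq> ?Y" using VY add_smult_e_mat_centralizer_sqzero[OF char i] by blast
  moreover have "zirreducible n ?W" using zirreducible_sweep[OF inf Virr e_mat_mats] i by simp
  ultimately have "?W = V" by (rule Vmax)
  then show ?thesis using v by blast
qed

theorem mainTheorem5:
  fixes n i :: nat
    and V :: "(nat \<Rightarrow> nat \<Rightarrow> 'k::alg_closed_field) set"
  assumes "CHAR('k) = 2"
    and "2 * i + 2 \<le> n"
    and "irr_component n (centralizer n (e_mat n i) \<inter> sqzero n) V"
    and "\<exists>x\<in>V. E_block_nonzero n i x"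
  shows "\<not> V \<subseteq> zclosure n (conj_orbit n (e_mat n i))"
proof
  assume sub: "V \<subseteq> zclosure n (conj_orbit n (e_mat n i))"
  have inf: "infinite (UNIV :: 'k set)" by (rule infinite_UNIV_alg_closed_field)
  obtain x a0 b0 where x: "x \<in> V" and a0: "i \<le> a0" "a0 < n - i" and b0: "b0 < n - i"
    and xab: "x a0 b0 \<noteq> 0"
    using assms(4) unfolding E_block_nonzero_def by blast
  define rs where "rs r = (if r < i then r else a0)" for r
  define cs where "cs c = (if c < i then c + (n - i) else b0)" for c
  obtain t where t: "minor (i+1) rs cs (\<lambda>a b. x a b + t * e_mat n i a b) \<noteq> 0"
    using ex_minor_add_smult_e_mat_nonzero[where x=x, OF inf a0(1) b0 xab]
    unfolding rs_def[abs_def] cs_def[abs_def] by blast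
  have "(\<lambda>a b. x a b + t * e_mat n i a b) \<in> V"
    using irr_component_add_smult_e_mat[OF inf assms(1) _ assms(3) x] assms(2) by simp
  then have "(\<lambda>a b. x a b + t * e_mat n i a b) \<in> zclosure n (conj_orbit n (e_mat n i))"
    using sub by blast
  moreover have "i \<le> n" and "\<And>r. r < i+1 \<Longrightarrow> rs r < n" and "\<And>c. c < i+1 \<Longrightarrow> cs c < n"
    using assms(2) a0 b0 by (auto simp: rs_def cs_def)
  ultimately have "minor (i+1) rs cs (\<lambda>a b. x a b + t * e_mat n i a b) = 0"
    by (intro minor_zclosure_conj_orbit_eq_0)
  with t show False by contradiction
qed

end
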